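(* Let $\bar\pi^*$ be an optimal (cost-minimizing) policy for $\bar{\mathcal M}$, with state-action value $\bar Q^*$ and state value $\bar V^*$, and let $\bar A^*(s,a)=\bar Q^*(s,a)-\bar Q^*(s,\bar\pi^* )$. Let $G_0$ be the set of admissible intervention rules $(\bar Q,\mu,0)$ with $\bar Q(d_0,\mu)=\bar V^*(d_0)$. For any $\mathcal G=(\bar Q,\mu,0)\in G_0$ with advantage $\bar A(s,a)=\bar Q(s,a)-\bar Q(s,\mu)$, and any policy $\pi$, let $\pi'=\mathcal G(\pi)$. Then for $d^{\pi'}$-almost every state $s$, $\bar A(s,a)\ge\bar A^*(s,a)$ for all $a\in\mathcal A$.
   Context: $\mathcal M=(\mathcal S,\mathcal A,P,r,\gamma)$ is a discounted MDP with discrete state and action spaces, discount $\gamma\in[0,1)$, initial distribution $d_0$. $\mathcal S$ contains two distinguished states $s_\triangleright,s_\circ$; $\mathcal S_{\mathrm{unsafe}}=\{s_\triangleright,s_\circ\}$, $\mathcal S_{\mathrm{safe}}=\mathcal S\setminus\mathcal S_{\mathrm{unsafe}}$; from $s_\triangleright$ every action leads to $s_\circ$ w.p. 1, $s_\circ$ is absorbing, $d_0(s_\circ)=0$. Cost $c(s,a)=\mathbb 1\{s=s_\triangleright\}$; $\bar{\mathcal M}=(\mathcal S,\mathcal A,P,c,\gamma)$; an optimal policy of $\bar{\mathcal M}$ minimizes expected discounted cost from every state. For $g:\mathcal S\times\mathcal A\to\mathbb R$, $g(s,\mu)=\mathbb E_{a\sim\mu(\cdot|s)}g(s,a)$, $g(d_0,\mu)=\mathbb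 E_{s\sim d_0}g(s,\mu)$. For a policy $\pi$, $d^{\pi}(s)=(1-\gamma)\sum_t\gamma^t\Pr(s_t=s)$ for trajectories of $\pi$ in $\mathcal M$ from $s_0\sim d_0$. Intervention rule: a triple $\mathcal G=(\bar Q,\mu,\eta)$, $\eta\in[0,1]$, backup policy $\mu$, $\bar Q:\mathcal S_{\mathrm{safe}}\times\mathcal A\to[0,1]$ extended by $\bar Q(s_\triangleright,a)=1$, $\bar Q(s_\circ,a)=0$; intervention set $\mathcal I=\{(s,a)\in\mathcal S_{\mathrm{safe}}\times\mathcal A:\bar Q(s,a)-\bar Q(s,\mu)>\eta\}$; shielded policy $\mathcal G(\pi)(a|s)=\pi(a|s)\mathbb 1\{(s,a)\notin\mathcal I\}+w(s)\mu(a|s)$ with $w(s)=\sum_{\tilde a:(s,\tilde a)\in\mathcal I}\pi(\tilde a|s)$. Admissible: for all $s\in\mathcal S_{\mathrm{safe}},a$: $\bar Q(s,a)\in[0,\gamma]$ and $\bar Q(s,a)\ge c(s,a)+\gamma\mathbb E_{s'\sim P(\cdot|s,a)}[\bar Q(s',\mu)]$. *)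

theory Defs
  imports "HOL-Probability.Probability"
begin

abbreviation Ex_pmf :: "'b pmf \<Rightarrow> ('b \<Rightarrow> real) \<Rightarrow> real" where
  "Ex_pmf p f \<equiv> measure_pmf.expectation p f"

primrec state_dist :: "('s \<Rightarrow> 'a \<Rightarrow> 's pmf) \<Rightarrow> ('s \<Rightarrow> 'a pmf) \<Rightarrow> 's pmf \<Rightarrow> nat \<Rightarrow> 's pmf" where
  "state_dist P pol d 0 = d"
| "state_dist P pol d (Suc n) =
     bind_pmf (state_dist P pol d n) (\<lambda>s. bind_pmf (pol s) (\<lambda>a. P s a))"

definition occupancy ::
  "('s \<Rightarrow> 'a \<Rightarrow> 's pmf) \<Rightarrow> real \<Rightarrow> 's pmf \<Rightarrow> ('s \<Rightarrow> 'a pmf) \<Rightarrow> 's \<Rightarrow> real" where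
  "occupancy P \<gamma> d0 pol s = (1 - \<gamma>) * (\<Sum>t. \<gamma> ^ t * pmf (state_dist P pol d0 t) s)"

definition value_fn ::
  "('s \<Rightarrow> 'a \<Rightarrow> 's pmf) \<Rightarrow> ('s \<Rightarrow> 'a \<Rightarrow> real) \<Rightarrow> real \<Rightarrow> ('s \<Rightarrow> 'a pmf) \<Rightarrow> 's \<Rightarrow> real" where
  "value_fn P c \<gamma> pol s =
     (\<Sum>t. \<gamma> ^ t * Ex_pmf (state_dist P pol (return_pmf s) t) (\<lambda>s'. Ex_pmf (pol s') (\<lambda>a. c s' a)))"

definition Q_fn ::
  "('s \<Rightarrow> 'a \<Rightarrow> 's pmf) \<Rightarrow> ('s \<Rightarrow> 'a \<Rightarrow> real) \<Rightarrow> real \<Rightarrow> ('s \<Rightarrow> 'a pmf) \<Rightarrow> 's \<Rightarrow> 'a \<Rightarrow> real" where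
  "Q_fn P c \<gamma> pol s a = c s a + \<gamma> * Ex_pmf (P s a) (value_fn P c \<gamma> pol)"

text \<open>g(s,mu) = E_{a ~ mu(.|s)} g(s,a).\<close>
definition at_pol :: "('s \<Rightarrow> 'a \<Rightarrow> real) \<Rightarrow> 's \<Rightarrow> ('s \<Rightarrow> 'a pmf) \<Rightarrow> real" where
  "at_pol g s mu = Ex_pmf (mu s) (g s)"

definition optimal_policy ::
  "('s \<Rightarrow> 'a \<Rightarrow> 's pmf) \<Rightarrow> ('s \<Rightarrow> 'a \<Rightarrow> real) \<Rightarrow> real \<Rightarrow> ('s \<Rightarrow> 'a pmf) \<Rightarrow> bool" where
  "optimal_policy P c \<gamma> pistar \<longleftrightarrow>
     (\<forall>pol s. value_fn P c \<gamma> pistar s \<le> value_fn P c \<gamma> pol s)"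

text \<open>Extension of Qbar (given on safe states) by Qbar(s_tri,a)=1, Qbar(s_circ,a)=0.\<close>
definition Qext :: "'s \<Rightarrow> 's \<Rightarrow> ('s \<Rightarrow> 'a \<Rightarrow> real) \<Rightarrow> 's \<Rightarrow> 'a \<Rightarrow> real" where
  "Qext s_tri s_circ Qb s a = (if s = s_tri then 1 else if s = s_circ then 0 else Qb s a)"

definition interv_set ::
  "'s \<Rightarrow> 's \<Rightarrow> ('s \<Rightarrow> 'a \<Rightarrow> real) \<Rightarrow> ('s \<Rightarrow> 'a pmf) \<Rightarrow> real \<Rightarrow> ('s \<times> 'a) set" where
  "interv_set s_tri s_circ Qb mu \<eta> =
     {(s, a). s \<noteq> s_tri \<and> s \<noteq> s_circ \<and>
        Qext s_tri s_circ Qb s a - at_pol (Qext s_tri s_circ Qb) s mu > \<eta>}"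

definition shielded ::
  "'s \<Rightarrow> 's \<Rightarrow> ('s \<Rightarrow> 'a \<Rightarrow> real) \<Rightarrow> ('s \<Rightarrow> 'a pmf) \<Rightarrow> real \<Rightarrow> ('s \<Rightarrow> 'a pmf) \<Rightarrow> 's \<Rightarrow> 'a pmf" where
  "shielded s_tri s_circ Qb mu \<eta> pol s =
     bind_pmf (pol s) (\<lambda>a'. if (s, a') \<in> interv_set s_tri s_circ Qb mu \<eta> then mu s else return_pmf a')"

definition admissible ::
  "('s \<Rightarrow> 'a \<Rightarrow> 's pmf) \<Rightarrow> ('s \<Rightarrow> 'a \<Rightarrow> real) \<Rightarrow> real \<Rightarrow> 's \<Rightarrow> 's \<Rightarrow>
   ('s \<Rightarrow> 'a \<Rightarrow> real) \<Rightarrow> ('s \<Rightarrow> 'a pmf) \<Rightarrow> bool" where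
  "admissible P c \<gamma> s_tri s_circ Qb mu \<longleftrightarrow>
     (\<forall>s a. s \<noteq> s_tri \<and> s \<noteq> s_circ \<longrightarrow>
        Qb s a \<in> {0..\<gamma>} \<and>
        Qb s a \<ge> c s a + \<gamma> * Ex_pmf (P s a) (\<lambda>s'. at_pol (Qext s_tri s_circ Qb) s' mu))"

lemma pmf_shielded:
  fixes s_tri s_circ :: 's and Qb :: "'s \<Rightarrow> 'a \<Rightarrow> real" and mu :: "'s \<Rightarrow> 'a pmf" and \<eta> :: real and I
  defines "I \<equiv> interv_set s_tri s_circ Qb mu \<eta>"
  shows "pmf (shielded s_tri s_circ Qb mu \<eta> pol s) a =
     pmf (pol s) a * (if (s, a) \<notin> I then 1 else 0)
     + measure_pmf.prob (pol s) {a'. (s, a') \<in> I} * pmf (mu s) a"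
proof -
  have "pmf (shielded s_tri s_circ Qb mu \<eta> pol s) a =
     Ex_pmf (pol s) (\<lambda>a'. (if (s,a') \<in> I then pmf (mu s) a else 0)
        + (if (s,a') \<notin> I then indicator {a} a' else 0))"
    unfolding shielded_def I_def[symmetric] pmf_bind
    by (intro Bochner_Integration.integral_cong) (auto simp: pmf_return indicator_def)
  also have "\<dots> = Ex_pmf (pol s) (\<lambda>a'. pmf (mu s) a * indicator {a'. (s,a') \<in> I} a'
        + (if (s, a) \<notin> I then 1 else 0) * indicator {a} a')"
    by (intro Bochner_Integration.integral_cong) (auto simp: indicator_def)
  also have "\<dots> = Ex_pmf (pol s) (\<lambda>a'. pmf (mu s) a * indicator {a'. (s,a') \<in> I} a')
        + Ex_pmf (pol s) (\<lambda>a'. (if (s, a) \<notin> I then 1 else 0) * indicator {a} a')"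
    by (rule Bochner_Integration.integral_add)
       (auto intro!: measure_pmf.integrable_const_bound[where B=1]
             simp: indicator_def pmf_le_1)
  also have "\<dots> = pmf (pol s) a * (if (s, a) \<notin> I then 1 else 0)
     + measure_pmf.prob (pol s) {a'. (s, a') \<in> I} * pmf (mu s) a"
    by (simp add: measure_pmf_single mult.commute)
  finally show ?thesis .
qed

end

theory Submission
  imports Defs
begin

(* Write U(s) = Qbar(s,mu) and V* for the optimal value. Admissibility says that Qbar dominates the
   one-step backup of U, so U bounds the cost of the backup policy mu from above and hence
   V* <= V^mu <= U and Q* <= Qbar. The hypothesis Qbar(d0,mu) = V*(d0) forces U = V* on the support
   of d0. At a state with U = V*, every action the shielded policy can play satisfies
   Qbar(s,a) <= V*(s) <= Q*(s,a): an intervened action is drawn from mu, under which Qbar averages to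
   V* while dominating it, and a non-intervened action has Qbar(s,a) <= U(s). Comparing the
   admissibility inequality with the Bellman equation of Q* then gives U = V* at every successor.
   So U = V* on all states of positive occupancy, and there
   Abar(s,a) = Qbar(s,a) - V*(s) >= Q*(s,a) - V*(s) = A*(s,a). *)

lemma integrable_measure_pmf_bounded:
  fixes f :: "'b \<Rightarrow> real"
  assumes "\<And>x. \<bar>f x\<bar> \<le> B"
  shows "integrable (measure_pmf p) f"
  by (rule measure_pmf.integrable_const_bound[where B=B]) (auto simp: assms)

lemma expectation_bind_pmf:
  fixes f :: "'b \<Rightarrow> real"
  assumes "\<And>x. \<bar>f x\<bar> \<le> B"
  shows "Ex_pmf (bind_pmf M N) f = Ex_pmf M (\<lambda>x. Ex_pmf (N x) f)"
  unfolding measure_pmf_bind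
  by (rule integral_bind[where K="count_space UNIV" and B=B and B'=1])
     (auto simp: assms measure_pmf.emeasure_space_1 measure_pmf_in_subprob_algebra
       intro: measure_pmf.finite_measure_axioms)

lemma expectation_pmf_bounds:
  fixes f :: "'b \<Rightarrow> real"
  assumes "\<And>x. a \<le> f x \<and> f x \<le> b"
  shows "a \<le> Ex_pmf p f \<and> Ex_pmf p f \<le> b"
proof -
  have "integrable (measure_pmf p) f"
    by (rule integrable_measure_pmf_bounded[where B="\<bar>a\<bar> + \<bar>b\<bar>"]) (smt (verit) assms)
  then show ?thesis
    using integral_mono[of "measure_pmf p" "\<lambda>_. a" f] integral_mono[of "measure_pmf p" f "\<lambda>_. b"] assms
    by auto
qed

lemma expectation_pmf_mono:
  fixes f g :: "'b \<Rightarrow> real"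
  assumes "\<And>x. \<bar>f x\<bar> \<le> B" "\<And>x. \<bar>g x\<bar> \<le> C" "\<And>x. f x \<le> g x"
  shows "Ex_pmf p f \<le> Ex_pmf p g"
  by (rule integral_mono) (auto intro: integrable_measure_pmf_bounded assms)

lemma expectation_pmf_eq_imp_eq_on_support:
  fixes f g :: "'b \<Rightarrow> real"
  assumes "\<And>x. f x \<le> g x" "\<And>x. \<bar>f x\<bar> \<le> B" "\<And>x. \<bar>g x\<bar> \<le> C"
    and "Ex_pmf p f = Ex_pmf p g" and "x \<in> set_pmf p"
  shows "f x = g x"
proof -
  have int_f: "integrable (measure_pmf p) f" and int_g: "integrable (measure_pmf p) g"
    using integrable_measure_pmf_bounded assms(2,3) by blast+
  then have int: "integrable (measure_pmf p) (\<lambda>x. g x - f x)" by simp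
  have "Ex_pmf p (\<lambda>x. g x - f x) = Ex_pmf p g - Ex_pmf p f"
    using int_f int_g by simp
  then have "Ex_pmf p (\<lambda>x. g x - f x) = 0" using assms(4) by simp
  then have "AE x in measure_pmf p. g x - f x = 0"
    using integral_nonneg_eq_0_iff_AE[OF int] assms(1) by simp
  then show ?thesis using assms(5) by (simp add: AE_measure_pmf_iff)
qed

lemma sums_expectation_pmf_geometric:
  fixes f :: "nat \<Rightarrow> 'b \<Rightarrow> real"
  assumes "0 \<le> \<gamma>" "\<gamma> < 1" and bound: "\<And>n x. \<bar>f n x\<bar> \<le> \<gamma> ^ n"
  shows "(\<lambda>n. Ex_pmf p (f n)) sums Ex_pmf p (\<lambda>x. \<Sum>n. f n x)"
proof (rule sums_integral)
  have geom: "summable (\<lambda>n. \<gamma> ^ n)" using assms(1,2) by simp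
  show "integrable (measure_pmf p) (f n)" for n
    by (rule integrable_measure_pmf_bounded[OF bound])
  show "AE x in measure_pmf p. summable (\<lambda>n. norm (f n x))"
    by (rule AE_I2, rule summable_comparison_test'[OF geom]) (simp add: bound)
  show "summable (\<lambda>n. Ex_pmf p (\<lambda>x. norm (f n x)))"
    by (rule summable_comparison_test'[OF geom])
       (use expectation_pmf_bounds[of 0 "\<lambda>x. norm (f _ x)" "\<gamma> ^ _" p] bound in simp)
qed

lemma state_dist_Suc_return:
  "state_dist P pol (return_pmf s) (Suc n) =
     bind_pmf (bind_pmf (pol s) (P s)) (\<lambda>s'. state_dist P pol (return_pmf s') n)"
proof -
  have shift: "state_dist P pol d (Suc n) =
      state_dist P pol (bind_pmf d (\<lambda>s. bind_pmf (pol s) (P s))) n" for d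
    by (induction n) auto
  have split: "state_dist P pol d n = bind_pmf d (\<lambda>s. state_dist P pol (return_pmf s) n)" for d
    by (induction n) (simp_all add: bind_return_pmf' bind_assoc_pmf)
  show ?thesis
    by (simp only: shift bind_return_pmf) (rule split)
qed

lemma set_pmf_state_dist_subset:
  assumes "set_pmf d \<subseteq> G"
    and "\<And>s a. s \<in> G \<Longrightarrow> a \<in> set_pmf (pol s) \<Longrightarrow> set_pmf (P s a) \<subseteq> G"
  shows "set_pmf (state_dist P pol d t) \<subseteq> G"
  by (induction t) (use assms in fastforce)+

(* For \<gamma> = 0 only time 0 contributes to the occupancy (as 0 ^ 0 = 1), so closure under
   transitions is needed only for \<gamma> \<noteq> 0. *)
lemma occupancy_pos_imp_mem:
  assumes "occupancy P \<gamma> d0 pol s > 0" and "set_pmf d0 \<subseteq> G"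
    and "\<And>s a. \<gamma> \<noteq> 0 \<Longrightarrow> s \<in> G \<Longrightarrow> a \<in> set_pmf (pol s) \<Longrightarrow>
      set_pmf (P s a) \<subseteq> G"
  shows "s \<in> G"
proof -
  have "\<exists>t. \<gamma> ^ t * pmf (state_dist P pol d0 t) s \<noteq> 0"
  proof (rule ccontr)
    assume "\<not> ?thesis"
    then have "(\<lambda>t. \<gamma> ^ t * pmf (state_dist P pol d0 t) s) = (\<lambda>_. 0)" by blast
    then have "occupancy P \<gamma> d0 pol s = 0" by (simp add: occupancy_def)
    with assms(1) show False by simp
  qed
  then obtain t where t: "\<gamma> ^ t * pmf (state_dist P pol d0 t) s \<noteq> 0" ..
  then have reached: "s \<in> set_pmf (state_dist P pol d0 t)" by (simp add: set_pmf_iff)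
  show ?thesis
  proof (cases "\<gamma> = 0")
    case True
    then have "t = 0" using t by (cases t) auto
    then show ?thesis using reached assms(2) by auto
  next
    case False
    then show ?thesis using reached set_pmf_state_dist_subset[OF assms(2)] assms(3) by blast
  qed
qed

locale discounted_cost_mdp =
  fixes P :: "'s \<Rightarrow> 'a \<Rightarrow> 's pmf" and c :: "'s \<Rightarrow> 'a \<Rightarrow> real" and \<gamma> :: real
  assumes discount_nonneg: "0 \<le> \<gamma>" and discount_less_1: "\<gamma> < 1"
    and cost_bounds: "\<And>s a. 0 \<le> c s a \<and> c s a \<le> 1"
begin

definition step_pmf :: "('s \<Rightarrow> 'a pmf) \<Rightarrow> 's \<Rightarrow> 's pmf" where
  "step_pmf pol s = bind_pmf (pol s) (P s)"

definition policy_cost :: "('s \<Rightarrow> 'a pmf) \<Rightarrow> 's \<Rightarrow> real" where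
  "policy_cost pol s = Ex_pmf (pol s) (c s)"

definition expected_cost :: "('s \<Rightarrow> 'a pmf) \<Rightarrow> 's \<Rightarrow> nat \<Rightarrow> real" where
  "expected_cost pol s t = Ex_pmf (state_dist P pol (return_pmf s) t) (policy_cost pol)"

lemma policy_cost_bounds: "0 \<le> policy_cost pol s \<and> policy_cost pol s \<le> 1"
  unfolding policy_cost_def by (rule expectation_pmf_bounds) (rule cost_bounds)

lemma expected_cost_bounds: "0 \<le> expected_cost pol s t \<and> expected_cost pol s t \<le> 1"
  unfolding expected_cost_def by (rule expectation_pmf_bounds) (rule policy_cost_bounds)

lemma integrable_expected_cost: "integrable (measure_pmf p) (\<lambda>s. expected_cost pol s t)"
  by (rule integrable_measure_pmf_bounded[where B=1]) (use expected_cost_bounds in simp)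

lemma expected_cost_0: "expected_cost pol s 0 = policy_cost pol s"
  by (simp add: expected_cost_def)

lemma expected_cost_Suc:
  "expected_cost pol s (Suc t) = Ex_pmf (step_pmf pol s) (\<lambda>s'. expected_cost pol s' t)"
  unfolding expected_cost_def step_pmf_def state_dist_Suc_return
  by (rule expectation_bind_pmf[where B=1]) (use policy_cost_bounds in \<open>simp add: abs_le_iff\<close>)

lemma abs_discounted_expected_cost_le: "\<bar>\<gamma> ^ t * expected_cost pol s t\<bar> \<le> \<gamma> ^ t"
  using expected_cost_bounds[of pol s t] discount_nonneg by (simp add: abs_mult mult_left_le)

lemma discounted_expected_cost_sums:
  "(\<lambda>t. \<gamma> ^ t * expected_cost pol s t) sums value_fn P c \<gamma> pol s"
proof -
  have "summable (\<lambda>t. \<gamma> ^ t * expected_cost pol s t)"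
    by (rule summable_comparison_test'[where g="\<lambda>t. \<gamma> ^ t"])
       (use discount_nonneg discount_less_1 abs_discounted_expected_cost_le in auto)
  then show ?thesis
    unfolding value_fn_def expected_cost_def policy_cost_def by (simp add: summable_sums)
qed

lemma value_fn_bounds: "0 \<le> value_fn P c \<gamma> pol s \<and> value_fn P c \<gamma> pol s \<le> 1 / (1 - \<gamma>)"
proof
  have geom: "(\<lambda>t. \<gamma> ^ t) sums (1 / (1 - \<gamma>))"
    using geometric_sums[of \<gamma>] discount_nonneg discount_less_1 by simp
  show "0 \<le> value_fn P c \<gamma> pol s"
    by (rule sums_le[OF _ sums_zero discounted_expected_cost_sums])
       (use expected_cost_bounds discount_nonneg in simp)
  show "value_fn P c \<gamma> pol s \<le> 1 / (1 - \<gamma>)"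
    by (rule sums_le[OF _ discounted_expected_cost_sums geom])
       (use abs_discounted_expected_cost_le in \<open>simp add: abs_le_iff\<close>)
qed

lemma abs_value_fn_le: "\<bar>value_fn P c \<gamma> pol s\<bar> \<le> 1 / (1 - \<gamma>)"
  using value_fn_bounds[of pol s] by simp

lemma expectation_one_step:
  assumes "\<And>s. \<bar>W s\<bar> \<le> B"
  shows "Ex_pmf (pol s) (\<lambda>a. c s a + \<gamma> * Ex_pmf (P s a) W)
       = policy_cost pol s + \<gamma> * Ex_pmf (step_pmf pol s) W"
proof -
  have next_bound: "\<bar>\<gamma> * Ex_pmf (P s a) W\<bar> \<le> \<gamma> * B" for a
  proof -
    have "-B \<le> Ex_pmf (P s a) W \<and> Ex_pmf (P s a) W \<le> B"
    proof (rule expectation_pmf_bounds)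
      show "-B \<le> W x \<and> W x \<le> B" for x using assms[of x] by (simp add: abs_le_iff)
    qed
    then show ?thesis
      using discount_nonneg by (simp add: abs_mult abs_le_iff mult_left_mono)
  qed
  have "Ex_pmf (pol s) (\<lambda>a. c s a + \<gamma> * Ex_pmf (P s a) W)
      = policy_cost pol s + Ex_pmf (pol s) (\<lambda>a. \<gamma> * Ex_pmf (P s a) W)"
    unfolding policy_cost_def
    by (intro Bochner_Integration.integral_add integrable_measure_pmf_bounded[where B=1]
          integrable_measure_pmf_bounded[OF next_bound])
       (use cost_bounds in auto)
  also have "\<dots> = policy_cost pol s + \<gamma> * Ex_pmf (step_pmf pol s) W"
    unfolding step_pmf_def by (simp add: expectation_bind_pmf[OF assms])
  finally show ?thesis .
qed

lemma value_fn_step: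
  "value_fn P c \<gamma> pol s = policy_cost pol s + \<gamma> * Ex_pmf (step_pmf pol s) (value_fn P c \<gamma> pol)"
proof -
  have tail: "(\<lambda>t. Ex_pmf (step_pmf pol s) (\<lambda>s'. \<gamma> ^ t * expected_cost pol s' t))
      sums Ex_pmf (step_pmf pol s) (\<lambda>s'. \<Sum>t. \<gamma> ^ t * expected_cost pol s' t)"
    by (rule sums_expectation_pmf_geometric[OF discount_nonneg discount_less_1
          abs_discounted_expected_cost_le])
  have "(\<lambda>s'. \<Sum>t. \<gamma> ^ t * expected_cost pol s' t) = value_fn P c \<gamma> pol"
    by (simp add: fun_eq_iff sums_unique[OF discounted_expected_cost_sums])
  with sums_mult[OF tail, of \<gamma>]
  have "(\<lambda>t. \<gamma> * Ex_pmf (step_pmf pol s) (\<lambda>s'. \<gamma> ^ t * expected_cost pol s' t))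
      sums (\<gamma> * Ex_pmf (step_pmf pol s) (value_fn P c \<gamma> pol))"
    by simp
  then have "(\<lambda>t. \<gamma> ^ Suc t * expected_cost pol s (Suc t))
      sums (\<gamma> * Ex_pmf (step_pmf pol s) (value_fn P c \<gamma> pol))"
    by (simp add: expected_cost_Suc mult.assoc)
  then have "(\<lambda>t. \<gamma> ^ t * expected_cost pol s t)
      sums (\<gamma> * Ex_pmf (step_pmf pol s) (value_fn P c \<gamma> pol) + policy_cost pol s)"
    by (subst (asm) sums_Suc_iff) (simp add: expected_cost_0)
  from sums_unique2[OF discounted_expected_cost_sums this] show ?thesis by simp
qed

lemma value_fn_bellman:
  "value_fn P c \<gamma> pol s = Ex_pmf (pol s) (\<lambda>a. c s a + \<gamma> * Ex_pmf (P s a) (value_fn P c \<gamma> pol))"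
  by (rule trans[OF value_fn_step expectation_one_step[OF abs_value_fn_le, symmetric]])

lemma at_pol_Q_fn: "at_pol (Q_fn P c \<gamma> pol) s pol = value_fn P c \<gamma> pol s"
  unfolding at_pol_def Q_fn_def by (rule value_fn_bellman[symmetric])

lemma value_fn_le_superharmonic:
  assumes W_bounds: "\<And>s. 0 \<le> W s \<and> W s \<le> B"
    and superharmonic: "\<And>s. Ex_pmf (pol s) (\<lambda>a. c s a + \<gamma> * Ex_pmf (P s a) W) \<le> W s"
  shows "value_fn P c \<gamma> pol s \<le> W s"
proof -
  have W_abs: "\<bar>W s\<bar> \<le> B" for s using W_bounds[of s] by simp
  have partial_sums: "(\<Sum>t<n. \<gamma> ^ t * expected_cost pol s t) \<le> W s" for n s
  proof (induction n arbitrary: s)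
    case 0
    then show ?case using W_bounds by simp
  next
    case (Suc n)
    let ?S = "\<lambda>s'. \<Sum>t<n. \<gamma> ^ t * expected_cost pol s' t"
    have S_bounds: "0 \<le> ?S s' \<and> ?S s' \<le> B" for s'
      using Suc.IH[of s'] W_bounds[of s'] expected_cost_bounds discount_nonneg
      by (auto intro: sum_nonneg)
    have "(\<Sum>t<Suc n. \<gamma> ^ t * expected_cost pol s t)
        = policy_cost pol s +
          \<gamma> * (\<Sum>t<n. \<gamma> ^ t * Ex_pmf (step_pmf pol s) (\<lambda>s'. expected_cost pol s' t))"
      by (simp add: sum.lessThan_Suc_shift expected_cost_0 expected_cost_Suc sum_distrib_left
          mult.assoc del: sum.lessThan_Suc)
    also have "(\<Sum>t<n. \<gamma> ^ t * Ex_pmf (step_pmf pol s) (\<lambda>s'. expected_cost pol s' t))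
        = Ex_pmf (step_pmf pol s) ?S"
      by (subst Bochner_Integration.integral_sum)
         (auto simp: integrable_expected_cost)
    also have "policy_cost pol s + \<gamma> * Ex_pmf (step_pmf pol s) ?S
        \<le> policy_cost pol s + \<gamma> * Ex_pmf (step_pmf pol s) W"
      using expectation_pmf_mono[where f="?S" and B=B and g=W and C=B, OF _ W_abs Suc.IH]
        S_bounds discount_nonneg
      by (simp add: mult_left_mono)
    also have "\<dots> \<le> W s"
      using superharmonic[of s] expectation_one_step[where W=W and B=B, OF W_abs] by simp
    finally show ?case .
  qed
  have "(\<lambda>n. \<Sum>t<n. \<gamma> ^ t * expected_cost pol s t) \<longlonglongrightarrow> value_fn P c \<gamma> pol s"
    using discounted_expected_cost_sums by (simp add: sums_def)
  then show ?thesis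
    by (rule LIMSEQ_le_const2) (use partial_sums in blast)
qed

(* Were Q*(s,a) < V*(s), then V* would be superharmonic for the policy that plays a at s and
   pistar elsewhere, and that policy would beat pistar at s. *)
lemma optimal_value_le_Q_fn:
  assumes "optimal_policy P c \<gamma> pistar"
  shows "value_fn P c \<gamma> pistar s \<le> Q_fn P c \<gamma> pistar s a"
proof (rule ccontr)
  define V where "V = value_fn P c \<gamma> pistar"
  assume "\<not> value_fn P c \<gamma> pistar s \<le> Q_fn P c \<gamma> pistar s a"
  then have improving: "c s a + \<gamma> * Ex_pmf (P s a) V < V s"
    by (simp add: V_def Q_fn_def)
  define pol where "pol = pistar(s := return_pmf a)"
  have "value_fn P c \<gamma> pol s' \<le> V s'" for s'
  proof (rule value_fn_le_superharmonic[where B="1 / (1 - \<gamma>)"])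
    show "0 \<le> V s' \<and> V s' \<le> 1 / (1 - \<gamma>)" for s' unfolding V_def by (rule value_fn_bounds)
    show "Ex_pmf (pol s') (\<lambda>b. c s' b + \<gamma> * Ex_pmf (P s' b) V) \<le> V s'" for s'
      using improving value_fn_bellman[of pistar s'] by (cases "s' = s") (auto simp: pol_def V_def)
  qed
  then have "Ex_pmf (P s a) (value_fn P c \<gamma> pol) \<le> Ex_pmf (P s a) V"
    by (intro expectation_pmf_mono[where B="1 / (1 - \<gamma>)" and C="1 / (1 - \<gamma>)"])
       (auto simp: V_def abs_value_fn_le)
  then have "value_fn P c \<gamma> pol s \<le> c s a + \<gamma> * Ex_pmf (P s a) V"
    using value_fn_bellman[of pol s] discount_nonneg by (simp add: pol_def mult_left_mono)
  with improving have "value_fn P c \<gamma> pol s < V s" by simp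
  moreover have "V s \<le> value_fn P c \<gamma> pol s"
    using assms unfolding optimal_policy_def V_def by blast
  ultimately show False by simp
qed

end

locale admissible_intervention_rule = discounted_cost_mdp P c \<gamma>
  for P :: "'s \<Rightarrow> 'a \<Rightarrow> 's pmf" and c :: "'s \<Rightarrow> 'a \<Rightarrow> real" and \<gamma> :: real +
  fixes s_tri s_circ :: 's and Qb :: "'s \<Rightarrow> 'a \<Rightarrow> real" and mu pistar :: "'s \<Rightarrow> 'a pmf"
  assumes distinct: "s_tri \<noteq> s_circ"
    and tri_trans: "\<And>a. P s_tri a = return_pmf s_circ"
    and circ_abs: "\<And>a. P s_circ a = return_pmf s_circ"
    and cost: "c = (\<lambda>s a. if s = s_tri then 1 else 0)"
    and opt: "optimal_policy P c \<gamma> pistar"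
    and adm: "admissible P c \<gamma> s_tri s_circ Qb mu"
begin

abbreviation Qbar :: "'s \<Rightarrow> 'a \<Rightarrow> real" where
  "Qbar \<equiv> Qext s_tri s_circ Qb"

abbreviation backup_value :: "'s \<Rightarrow> real" where
  "backup_value s \<equiv> at_pol Qbar s mu"

abbreviation opt_value :: "'s \<Rightarrow> real" where
  "opt_value \<equiv> value_fn P c \<gamma> pistar"

abbreviation opt_Q :: "'s \<Rightarrow> 'a \<Rightarrow> real" where
  "opt_Q \<equiv> Q_fn P c \<gamma> pistar"

lemma Qbar_bounds: "0 \<le> Qbar s a \<and> Qbar s a \<le> 1"
proof (cases "s = s_tri \<or> s = s_circ")
  case True
  then show ?thesis by (auto simp: Qext_def)
next
  case False
  then have "Qb s a \<in> {0..\<gamma>}" using adm by (simp add: admissible_def)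
  with False show ?thesis using discount_less_1 by (simp add: Qext_def)
qed

lemma backup_value_bounds: "0 \<le> backup_value s \<and> backup_value s \<le> 1"
  unfolding at_pol_def by (rule expectation_pmf_bounds) (rule Qbar_bounds)

lemma Qbar_unsafe_eq_backup_value:
  assumes "s = s_tri \<or> s = s_circ"
  shows "Qbar s a = backup_value s"
proof -
  define v :: real where "v = (if s = s_tri then 1 else 0)"
  have "Qbar s = (\<lambda>_. v)" using assms distinct by (auto simp: fun_eq_iff Qext_def v_def)
  then show ?thesis by (simp add: at_pol_def)
qed

lemma Qbar_ge_backup_step: "c s a + \<gamma> * Ex_pmf (P s a) backup_value \<le> Qbar s a"
proof (cases "s = s_tri \<or> s = s_circ")
  case True
  have "backup_value s_circ = 0"
    using Qbar_unsafe_eq_backup_value[of s_circ] distinct by (simp add: Qext_def)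
  with True show ?thesis using distinct by (auto simp: cost Qext_def tri_trans circ_abs)
next
  case False
  then show ?thesis using adm unfolding admissible_def Qext_def by auto
qed

lemma optimal_value_le_backup_value: "opt_value s \<le> backup_value s"
proof -
  have "value_fn P c \<gamma> mu s \<le> backup_value s"
  proof (rule value_fn_le_superharmonic[where B=1])
    show "0 \<le> backup_value s \<and> backup_value s \<le> 1" for s by (rule backup_value_bounds)
    have next_bound: "\<bar>c s a + \<gamma> * Ex_pmf (P s a) backup_value\<bar> \<le> 2" for s a
    proof -
      have "0 \<le> Ex_pmf (P s a) backup_value \<and> Ex_pmf (P s a) backup_value \<le> 1"
        by (rule expectation_pmf_bounds) (rule backup_value_bounds)
      then have "0 \<le> \<gamma> * Ex_pmf (P s a) backup_value \<and> \<gamma> * Ex_pmf (P s a) backup_value \<le> 1"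
        using discount_nonneg discount_less_1 by (simp add: mult_le_one)
      then show ?thesis
        using cost_bounds[of s a] discount_nonneg by (simp add: abs_le_iff)
    qed
    show "Ex_pmf (mu s) (\<lambda>a. c s a + \<gamma> * Ex_pmf (P s a) backup_value) \<le> backup_value s" for s
    proof -
      have "Ex_pmf (mu s) (\<lambda>a. c s a + \<gamma> * Ex_pmf (P s a) backup_value) \<le> Ex_pmf (mu s) (Qbar s)"
        by (rule expectation_pmf_mono[where B=2 and C=1])
           (use next_bound Qbar_bounds Qbar_ge_backup_step in \<open>auto simp: abs_le_iff\<close>)
      then show ?thesis by (simp add: at_pol_def)
    qed
  qed
  moreover have "opt_value s \<le> value_fn P c \<gamma> mu s"
    using opt unfolding optimal_policy_def by blast
  ultimately show ?thesis by simp
qed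

lemma expectation_optimal_value_le_backup_value:
  "Ex_pmf p opt_value \<le> Ex_pmf p backup_value"
  by (rule expectation_pmf_mono[where B="1 / (1 - \<gamma>)" and C=1])
     (use abs_value_fn_le backup_value_bounds optimal_value_le_backup_value in auto)

lemma backup_value_eq_optimal_value_on_support:
  assumes "Ex_pmf p backup_value = Ex_pmf p opt_value" and "s \<in> set_pmf p"
  shows "backup_value s = opt_value s"
  by (rule expectation_pmf_eq_imp_eq_on_support[where B="1 / (1 - \<gamma>)" and C=1, symmetric])
     (use assms abs_value_fn_le backup_value_bounds optimal_value_le_backup_value in auto)

lemma opt_Q_le_Qbar: "opt_Q s a \<le> Qbar s a"
proof -
  have "\<gamma> * Ex_pmf (P s a) opt_value \<le> \<gamma> * Ex_pmf (P s a) backup_value"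
    using expectation_optimal_value_le_backup_value discount_nonneg by (rule mult_left_mono)
  then show ?thesis using Qbar_ge_backup_step[of s a] by (simp add: Q_fn_def)
qed

lemma shielded_action_le_optimal_value:
  assumes tight: "backup_value s = opt_value s"
    and a: "a \<in> set_pmf (shielded s_tri s_circ Qb mu 0 pol s)"
  shows "Qbar s a \<le> opt_value s"
proof -
  obtain a' where a_from: "a \<in> set_pmf
      (if (s, a') \<in> interv_set s_tri s_circ Qb mu 0 then mu s else return_pmf a')"
    using a unfolding shielded_def by auto
  show ?thesis
  proof (cases "(s, a') \<in> interv_set s_tri s_circ Qb mu 0")
    case True
    have "opt_value s = Qbar s a"
    proof (rule expectation_pmf_eq_imp_eq_on_support
        [where f="\<lambda>_. opt_value s" and g="Qbar s" and B="1 / (1 - \<gamma>)" and C=1])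
      show "opt_value s \<le> Qbar s b" for b
        using optimal_value_le_Q_fn[OF opt] opt_Q_le_Qbar order_trans by blast
      show "\<bar>Qbar s b\<bar> \<le> 1" for b using Qbar_bounds[of s b] by simp
      show "Ex_pmf (mu s) (\<lambda>_. opt_value s) = Ex_pmf (mu s) (Qbar s)"
        using tight by (simp add: at_pol_def)
      show "a \<in> set_pmf (mu s)" using a_from True by simp
    qed (rule abs_value_fn_le)
    then show ?thesis by simp
  next
    case False
    then show ?thesis
      using a_from tight Qbar_unsafe_eq_backup_value[of s a] by (auto simp: interv_set_def)
  qed
qed

lemma tight_states_closed:
  assumes "\<gamma> \<noteq> 0" and tight: "backup_value s = opt_value s"
    and a: "a \<in> set_pmf (shielded s_tri s_circ Qb mu 0 pol s)" and s': "s' \<in> set_pmf (P s a)"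
  shows "backup_value s' = opt_value s'"
proof (rule backup_value_eq_optimal_value_on_support[OF _ s'])
  have "\<gamma> * Ex_pmf (P s a) backup_value \<le> \<gamma> * Ex_pmf (P s a) opt_value"
    using Qbar_ge_backup_step[of s a] shielded_action_le_optimal_value[OF tight a]
      optimal_value_le_Q_fn[OF opt, of s a]
    unfolding Q_fn_def by simp
  then have "Ex_pmf (P s a) backup_value \<le> Ex_pmf (P s a) opt_value"
    using assms(1) discount_nonneg by simp
  then show "Ex_pmf (P s a) backup_value = Ex_pmf (P s a) opt_value"
    using expectation_optimal_value_le_backup_value by (simp add: order_antisym)
qed

lemma tight_imp_advantage_ge:
  assumes "backup_value s = opt_value s"
  shows "Qbar s a - backup_value s \<ge> opt_Q s a - at_pol opt_Q s pistar"
  using assms opt_Q_le_Qbar[of s a] by (simp add: at_pol_Q_fn)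

end

theorem mainTheorem6:
  fixes P :: "'s::countable \<Rightarrow> 'a::countable \<Rightarrow> 's pmf"
    and \<gamma> :: real and d0 :: "'s pmf" and s_tri s_circ :: 's
    and c :: "'s \<Rightarrow> 'a \<Rightarrow> real"
    and pistar :: "'s \<Rightarrow> 'a pmf"
    and Qb :: "'s \<Rightarrow> 'a \<Rightarrow> real" and mu :: "'s \<Rightarrow> 'a pmf"
    and pol :: "'s \<Rightarrow> 'a pmf"
  assumes gamma: "0 \<le> \<gamma>" "\<gamma> < 1"
    and distinct: "s_tri \<noteq> s_circ"
    and tri_trans: "\<And>a. P s_tri a = return_pmf s_circ"
    and circ_abs: "\<And>a. P s_circ a = return_pmf s_circ"
    and d0_circ: "pmf d0 s_circ = 0"
    and cost: "c = (\<lambda>s a. if s = s_tri then 1 else 0)"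
    and opt: "optimal_policy P c \<gamma> pistar"
    and adm: "admissible P c \<gamma> s_tri s_circ Qb mu"
    and G0: "Ex_pmf d0 (\<lambda>s. at_pol (Qext s_tri s_circ Qb) s mu)
             = Ex_pmf d0 (value_fn P c \<gamma> pistar)"
  shows "\<forall>s. occupancy P \<gamma> d0 (shielded s_tri s_circ Qb mu 0 pol) s > 0 \<longrightarrow>
           (\<forall>a. Qext s_tri s_circ Qb s a - at_pol (Qext s_tri s_circ Qb) s mu
                \<ge> Q_fn P c \<gamma> pistar s a - at_pol (Q_fn P c \<gamma> pistar) s pistar)"
proof -
  interpret admissible_intervention_rule P c \<gamma> s_tri s_circ Qb mu pistar
    by unfold_locales (use gamma distinct tri_trans circ_abs cost opt adm in auto)
  let ?tight = "{s. backup_value s = opt_value s}"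
  have "s \<in> ?tight" if "occupancy P \<gamma> d0 (shielded s_tri s_circ Qb mu 0 pol) s > 0" for s
  proof (rule occupancy_pos_imp_mem[OF that])
    show "set_pmf d0 \<subseteq> ?tight"
      using backup_value_eq_optimal_value_on_support[OF G0] by blast
    show "set_pmf (P s a) \<subseteq> ?tight"
      if "\<gamma> \<noteq> 0" "s \<in> ?tight" "a \<in> set_pmf (shielded s_tri s_circ Qb mu 0 pol s)" for s a
      using tight_states_closed that by blast
  qed
  then show ?thesis using tight_imp_advantage_ge by blast
qed

end
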